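(* Let $j:B\to\widehat A$ be an aspherical functor (in the sense below). Let $C$ be the full subcategory of $\widehat A$ whose objects are the representable presheaves and the presheaves $j(b)$ for $b\in B$; let $i:C\hookrightarrow\widehat A$ be the inclusion, $j':B\to C$ the factorization of $j$ through $C$ (so $ij'=j$), and $h':A\to C$ the factorization of the Yoneda embedding $h:A\to\widehat A$ (so $ih'=h$). Then $j'$ and $h'$ are aspherical functors.
   Context: A small category is aspherical if its nerve is weakly contractible; a presheaf $X$ on a small category $D$ is aspherical if its category of elements $D/X$ is aspherical. A functor $u:D\to E$ between small categories is aspherical if for every object $e$ of $E$ the category $D/e$ (objects $(d,u(d)\to e)$) is aspherical. For a functor $j:B\to\widehat A$ (presheaves of sets on $A$), let $j^*:\widehat A\to\widehat B$, $j^*(X)(b)=\mathrm{Hom}_{\widehat A}(j(b),X)$. Such $j$ is called aspherical if: (1) for every $b\in B$, $j(b)$ is an aspherical presheaf on $A$; (2) for every $b\in B$, $j^*j(b)$ is an aspherical presheaf on $B$; (3) for every $a\in A$, $j^*(a)$ is an aspherical presheaf on $B$ ($a$ denoting the representable presheaf). *)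

theory Defs
  imports "HOL-Analysis.Analysis"
begin

text \<open>A small category: a set of objects, a set of arrows, domain, codomain,
  identities, and composition (Comp g f means g after f).\<close>

record ('o, 'm) cat =
  Obj  :: "'o set"
  Arr  :: "'m set"
  Dom  :: "'m \<Rightarrow> 'o"
  Cod  :: "'m \<Rightarrow> 'o"
  Idm  :: "'o \<Rightarrow> 'm"
  Comp :: "'m \<Rightarrow> 'm \<Rightarrow> 'm"

definition hom :: "('o, 'm) cat \<Rightarrow> 'o \<Rightarrow> 'o \<Rightarrow> 'm set" where
  "hom C x y = {f \<in> Arr C. Dom C f = x \<and> Cod C f = y}"

definition category :: "('o, 'm) cat \<Rightarrow> bool" where
  "category C \<longleftrightarrow>
     (\<forall>f\<in>Arr C. Dom C f \<in> Obj C \<and> Cod C f \<in> Obj C) \<and>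
     (\<forall>x\<in>Obj C. Idm C x \<in> hom C x x) \<and>
     (\<forall>f\<in>Arr C. \<forall>g\<in>Arr C. Cod C f = Dom C g \<longrightarrow>
         Comp C g f \<in> hom C (Dom C f) (Cod C g)) \<and>
     (\<forall>f\<in>Arr C. Comp C f (Idm C (Dom C f)) = f \<and> Comp C (Idm C (Cod C f)) f = f) \<and>
     (\<forall>f\<in>Arr C. \<forall>g\<in>Arr C. \<forall>h\<in>Arr C. Cod C f = Dom C g \<longrightarrow> Cod C g = Dom C h \<longrightarrow>
         Comp C h (Comp C g f) = Comp C (Comp C h g) f)"

definition is_functor :: "('o, 'm) cat \<Rightarrow> ('p, 'n) cat \<Rightarrow> ('o \<Rightarrow> 'p) \<Rightarrow> ('m \<Rightarrow> 'n) \<Rightarrow> bool" where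
  "is_functor C D Fo Fm \<longleftrightarrow>
     (\<forall>x\<in>Obj C. Fo x \<in> Obj D) \<and>
     (\<forall>f\<in>Arr C. Fm f \<in> hom D (Fo (Dom C f)) (Fo (Cod C f))) \<and>
     (\<forall>x\<in>Obj C. Fm (Idm C x) = Idm D (Fo x)) \<and>
     (\<forall>f\<in>Arr C. \<forall>g\<in>Arr C. Cod C f = Dom C g \<longrightarrow>
         Fm (Comp C g f) = Comp D (Fm g) (Fm f))"

text \<open>Presheaves are taken extensional (empty outside objects, undefined action outside its
  domain) so that HOL equality is equality of presheaves.\<close>

type_synonym ('o, 'm, 'v) psh = "('o \<Rightarrow> 'v set) \<times> ('m \<Rightarrow> 'v \<Rightarrow> 'v)"

definition presheaf :: "('o, 'm) cat \<Rightarrow> ('o, 'm, 'v) psh \<Rightarrow> bool" where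
  "presheaf A X \<longleftrightarrow>
     (\<forall>x. x \<notin> Obj A \<longrightarrow> fst X x = {}) \<and>
     (\<forall>f\<in>Arr A. \<forall>v\<in>fst X (Cod A f). snd X f v \<in> fst X (Dom A f)) \<and>
     (\<forall>x\<in>Obj A. \<forall>v\<in>fst X x. snd X (Idm A x) v = v) \<and>
     (\<forall>f\<in>Arr A. \<forall>g\<in>Arr A. Cod A f = Dom A g \<longrightarrow>
         (\<forall>v\<in>fst X (Cod A g). snd X (Comp A g f) v = snd X f (snd X g v))) \<and>
     (\<forall>f v. \<not> (f \<in> Arr A \<and> v \<in> fst X (Cod A f)) \<longrightarrow> snd X f v = undefined)"

definition nt_hom :: "('o, 'm) cat \<Rightarrow> ('o, 'm, 'v) psh \<Rightarrow> ('o, 'm, 'w) psh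
                       \<Rightarrow> ('o \<Rightarrow> 'v \<Rightarrow> 'w) set" where
  "nt_hom A X Y = {\<tau>.
     (\<forall>x\<in>Obj A. \<forall>v\<in>fst X x. \<tau> x v \<in> fst Y x) \<and>
     (\<forall>f\<in>Arr A. \<forall>v\<in>fst X (Cod A f). \<tau> (Dom A f) (snd X f v) = snd Y f (\<tau> (Cod A f) v)) \<and>
     (\<forall>x v. \<not> (x \<in> Obj A \<and> v \<in> fst X x) \<longrightarrow> \<tau> x v = undefined)}"

text \<open>The category of presheaves on A, with values in sets of elements of the type 'm
  of arrows of A (a universe containing A).  Arrows are triples (source, target, \<tau>).\<close>

type_synonym ('o, 'm) pshA = "('o, 'm, 'm) psh"
type_synonym ('o, 'm) pshA_arr = "('o, 'm) pshA \<times> ('o, 'm) pshA \<times> ('o \<Rightarrow> 'm \<Rightarrow> 'm)"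

definition nt_id :: "('o, 'm) cat \<Rightarrow> ('o, 'm, 'v) psh \<Rightarrow> ('o \<Rightarrow> 'v \<Rightarrow> 'v)" where
  "nt_id A X = (\<lambda>x v. if x \<in> Obj A \<and> v \<in> fst X x then v else undefined)"

definition nt_comp :: "('o, 'm) cat \<Rightarrow> ('o, 'm, 'u) psh \<Rightarrow> ('o \<Rightarrow> 'v \<Rightarrow> 'w)
                        \<Rightarrow> ('o \<Rightarrow> 'u \<Rightarrow> 'v) \<Rightarrow> ('o \<Rightarrow> 'u \<Rightarrow> 'w)" where
  "nt_comp A X \<tau> \<sigma> = (\<lambda>x v. if x \<in> Obj A \<and> v \<in> fst X x then \<tau> x (\<sigma> x v) else undefined)"

definition psh_cat :: "('o, 'm) cat \<Rightarrow> (('o, 'm) pshA, ('o, 'm) pshA_arr) cat" where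
  "psh_cat A =
     \<lparr> Obj = {X. presheaf A X},
       Arr = {(X, Y, \<tau>). presheaf A X \<and> presheaf A Y \<and> \<tau> \<in> nt_hom A X Y},
       Dom = (\<lambda>t. fst t),
       Cod = (\<lambda>t. fst (snd t)),
       Idm = (\<lambda>X. (X, X, nt_id A X)),
       Comp = (\<lambda>t s. (fst s, fst (snd t), nt_comp A (fst s) (snd (snd t)) (snd (snd s)))) \<rparr>"

definition yo :: "('o, 'm) cat \<Rightarrow> 'o \<Rightarrow> ('o, 'm) pshA" where
  "yo A a = (\<lambda>x. if x \<in> Obj A then hom A x a else {},
             \<lambda>f g. if f \<in> Arr A \<and> g \<in> hom A (Cod A f) a then Comp A g f else undefined)"

definition yo_arr :: "('o, 'm) cat \<Rightarrow> 'm \<Rightarrow> ('o, 'm) pshA_arr" where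
  "yo_arr A f = (yo A (Dom A f), yo A (Cod A f),
                 \<lambda>x g. if x \<in> Obj A \<and> g \<in> hom A x (Dom A f) then Comp A f g else undefined)"

definition full_sub :: "('o, 'm) cat \<Rightarrow> 'o set \<Rightarrow> ('o, 'm) cat" where
  "full_sub C S = C\<lparr> Obj := S, Arr := {f \<in> Arr C. Dom C f \<in> S \<and> Cod C f \<in> S} \<rparr>"

definition pull_hom :: "('o, 'm) cat \<Rightarrow> ('p, 'n) cat \<Rightarrow> ('o \<Rightarrow> 'p) \<Rightarrow> ('m \<Rightarrow> 'n) \<Rightarrow> 'p
                         \<Rightarrow> ('o, 'm, 'n) psh" where
  "pull_hom D E uo um e =
     (\<lambda>d. if d \<in> Obj D then hom E (uo d) e else {},
      \<lambda>f g. if f \<in> Arr D \<and> g \<in> hom E (uo (Cod D f)) e then Comp E g (um f) else undefined)"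

definition jstar :: "('o, 'm) cat \<Rightarrow> ('p, 'n) cat \<Rightarrow> ('p \<Rightarrow> ('o, 'm) pshA)
                      \<Rightarrow> ('n \<Rightarrow> ('o, 'm) pshA_arr) \<Rightarrow> ('o, 'm) pshA
                      \<Rightarrow> ('p, 'n, ('o, 'm) pshA_arr) psh" where
  "jstar A B jo jm X = pull_hom B (psh_cat A) jo jm X"

definition elements :: "('o, 'm) cat \<Rightarrow> ('o, 'm, 'v) psh \<Rightarrow> ('o \<times> 'v, 'm \<times> 'v) cat" where
  "elements A X =
     \<lparr> Obj = {(x, v). x \<in> Obj A \<and> v \<in> fst X x},
       Arr = {(f, v). f \<in> Arr A \<and> v \<in> fst X (Cod A f)},
       Dom = (\<lambda>(f, v). (Dom A f, snd X f v)),
       Cod = (\<lambda>(f, v). (Cod A f, v)),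
       Idm = (\<lambda>(x, v). (Idm A x, v)),
       Comp = (\<lambda>(g, w) (f, v). (Comp A g f, w)) \<rparr>"

text \<open>The category D/e for u : D \<rightarrow> E: objects (d, g : u d \<rightarrow> e), arrows (f, g) with
  f : d \<rightarrow> d', g : u d' \<rightarrow> e, going from (d, g \<circ> u f) to (d', g).\<close>

definition slice :: "('o, 'm) cat \<Rightarrow> ('p, 'n) cat \<Rightarrow> ('o \<Rightarrow> 'p) \<Rightarrow> ('m \<Rightarrow> 'n) \<Rightarrow> 'p
                      \<Rightarrow> ('o \<times> 'n, 'm \<times> 'n) cat" where
  "slice D E uo um e = elements D (pull_hom D E uo um e)"

text \<open>n-simplices of the nerve: functors [n] \<rightarrow> C, encoded as sigma i j : x_i \<rightarrow> x_j for
  i \<le> j \<le> n (undefined elsewhere).\<close>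

definition nerve :: "('o, 'm) cat \<Rightarrow> nat \<Rightarrow> (nat \<Rightarrow> nat \<Rightarrow> 'm) set" where
  "nerve C n = {\<sigma>.
     (\<forall>i\<le>n. Dom C (\<sigma> i i) \<in> Obj C \<and> \<sigma> i i = Idm C (Dom C (\<sigma> i i))) \<and>
     (\<forall>i j. i \<le> j \<and> j \<le> n \<longrightarrow> \<sigma> i j \<in> hom C (Dom C (\<sigma> i i)) (Dom C (\<sigma> j j))) \<and>
     (\<forall>i j k. i \<le> j \<and> j \<le> k \<and> k \<le> n \<longrightarrow> Comp C (\<sigma> j k) (\<sigma> i j) = \<sigma> i k) \<and>
     (\<forall>i j. \<not> (i \<le> j \<and> j \<le> n) \<longrightarrow> \<sigma> i j = undefined)}"

definition std_simplex :: "nat \<Rightarrow> (nat \<Rightarrow> real) set" where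
  "std_simplex n = {t. (\<forall>i. 0 \<le> t i) \<and> (\<forall>i>n. t i = 0) \<and> (\<Sum>i\<le>n. t i) = 1}"

definition mono_map :: "nat \<Rightarrow> nat \<Rightarrow> (nat \<Rightarrow> nat) \<Rightarrow> bool" where
  "mono_map m n \<theta> \<longleftrightarrow> (\<forall>i j. i \<le> j \<and> j \<le> m \<longrightarrow> \<theta> i \<le> \<theta> j) \<and> (\<forall>i\<le>m. \<theta> i \<le> n)"

definition simp_face :: "(nat \<Rightarrow> nat \<Rightarrow> 'm) \<Rightarrow> (nat \<Rightarrow> nat) \<Rightarrow> nat \<Rightarrow> (nat \<Rightarrow> nat \<Rightarrow> 'm)" where
  "simp_face \<sigma> \<theta> m = (\<lambda>i j. if i \<le> j \<and> j \<le> m then \<sigma> (\<theta> i) (\<theta> j) else undefined)"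

definition simp_push :: "(nat \<Rightarrow> nat) \<Rightarrow> nat \<Rightarrow> nat \<Rightarrow> (nat \<Rightarrow> real) \<Rightarrow> (nat \<Rightarrow> real)" where
  "simp_push \<theta> m n t = (\<lambda>k. if k \<le> n then (\<Sum>i\<in>{i. i \<le> m \<and> \<theta> i = k}. t i) else 0)"

type_synonym 'm rpt = "nat \<times> (nat \<Rightarrow> nat \<Rightarrow> 'm) \<times> (nat \<Rightarrow> real)"

text \<open>Generating relation of the realization coend: (sigma \<circ> theta, s) ~ (sigma, theta_* s).\<close>

definition real_gen :: "('o, 'm) cat \<Rightarrow> 'm rpt \<Rightarrow> 'm rpt \<Rightarrow> bool" where
  "real_gen C p q \<longleftrightarrow> (\<exists>m n \<sigma> \<theta> s.
      p = (m, simp_face \<sigma> \<theta> m, s) \<and> q = (n, \<sigma>, simp_push \<theta> m n s) \<and>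
      \<sigma> \<in> nerve C n \<and> mono_map m n \<theta> \<and> s \<in> std_simplex m)"

definition real_pts :: "('o, 'm) cat \<Rightarrow> 'm rpt set" where
  "real_pts C = {(n, \<sigma>, t). \<sigma> \<in> nerve C n \<and> t \<in> std_simplex n}"

definition real_class :: "('o, 'm) cat \<Rightarrow> 'm rpt \<Rightarrow> 'm rpt set" where
  "real_class C p = {q. (\<lambda>x y. real_gen C x y \<or> real_gen C y x)\<^sup>*\<^sup>* p q}"

definition realization :: "('o, 'm) cat \<Rightarrow> 'm rpt set topology" where
  "realization C = topology (\<lambda>U. U \<subseteq> real_class C ` real_pts C \<and>
      (\<forall>n \<sigma>. \<sigma> \<in> nerve C n \<longrightarrow>
         openin (subtopology (powertop_real UNIV) (std_simplex n))
                {t \<in> std_simplex n. real_class C (n, \<sigma>, t) \<in> U}))"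

definition weakly_contractible :: "'a topology \<Rightarrow> bool" where
  "weakly_contractible X \<longleftrightarrow> topspace X \<noteq> {} \<and>
     (\<forall>n f. continuous_map (nsphere n) X f \<longrightarrow>
        (\<exists>c. homotopic_with (\<lambda>_. True) (nsphere n) X f (\<lambda>_. c)))"

definition aspherical_cat :: "('o, 'm) cat \<Rightarrow> bool" where
  "aspherical_cat C \<longleftrightarrow> weakly_contractible (realization C)"

definition aspherical_psh :: "('o, 'm) cat \<Rightarrow> ('o, 'm, 'v) psh \<Rightarrow> bool" where
  "aspherical_psh A X \<longleftrightarrow> aspherical_cat (elements A X)"

definition aspherical_functor :: "('o, 'm) cat \<Rightarrow> ('p, 'n) cat \<Rightarrow> ('o \<Rightarrow> 'p) \<Rightarrow> ('m \<Rightarrow> 'n) \<Rightarrow> bool" where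
  "aspherical_functor D E uo um \<longleftrightarrow> (\<forall>e\<in>Obj E. aspherical_cat (slice D E uo um e))"

definition aspherical_psh_functor :: "('o, 'm) cat \<Rightarrow> ('p, 'n) cat \<Rightarrow> ('p \<Rightarrow> ('o, 'm) pshA)
                                       \<Rightarrow> ('n \<Rightarrow> ('o, 'm) pshA_arr) \<Rightarrow> bool" where
  "aspherical_psh_functor A B jo jm \<longleftrightarrow>
     (\<forall>b\<in>Obj B. aspherical_psh A (jo b)) \<and>
     (\<forall>b\<in>Obj B. aspherical_psh B (jstar A B jo jm (jo b))) \<and>
     (\<forall>a\<in>Obj A. aspherical_psh B (jstar A B jo jm (yo A a)))"

end

theory Submission
  imports Defs
begin

(* The slice of j' over an object c of C is literally the category of elements of j^*(c), because
   a full subcategory has the hom-sets of the ambient category; conditions (2) and (3) make these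
   aspherical.  By the Yoneda lemma the slice of h' over c is isomorphic to the category of
   elements of c itself, which is aspherical by (1) when c = j(b) and has a terminal object when
   c is representable.  A category with a terminal object has a contractible realization: joining
   every simplex to the terminal vertex and moving all barycentric weight onto that vertex is a
   contraction.  Finally a functor induces a continuous map of realizations, so a retract of an
   aspherical category (in particular an isomorphic copy) is aspherical. *)

lemma weakly_contractible_retraction:
  assumes f: "continuous_map X Y f" and g: "continuous_map Y X g"
    and fg: "\<And>y. y \<in> topspace Y \<Longrightarrow> f (g y) = y" and X: "weakly_contractible X"
  shows "weakly_contractible Y"
  unfolding weakly_contractible_def
proof (intro conjI allI impI)
  show "topspace Y \<noteq> {}"
    using X f unfolding weakly_contractible_def continuous_map_def by blast
  fix n k assume k: "continuous_map (nsphere n) Y k"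
  then have "continuous_map (nsphere n) X (g \<circ> k)"
    using g by (rule continuous_map_compose)
  then obtain c where "homotopic_with (\<lambda>_. True) (nsphere n) X (g \<circ> k) (\<lambda>_. c)"
    using X unfolding weakly_contractible_def by blast
  then have "homotopic_with (\<lambda>_. True) (nsphere n) Y (f \<circ> (g \<circ> k)) (f \<circ> (\<lambda>_. c))"
    using f by (rule homotopic_with_compose_continuous_map_left) simp
  moreover have "homotopic_with (\<lambda>_. True) (nsphere n) Y k (f \<circ> (g \<circ> k))"
    using k fg continuous_map_image_subset_topspace[OF k]
    by (intro homotopic_with_equal) auto
  ultimately have "homotopic_with (\<lambda>_. True) (nsphere n) Y k (\<lambda>_. f c)"
    using homotopic_with_trans by (fastforce simp: o_def)
  then show "\<exists>c. homotopic_with (\<lambda>_. True) (nsphere n) Y k (\<lambda>_. c)" by blast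
qed

lemma contractible_imp_weakly_contractible:
  assumes "contractible_space X" and "topspace X \<noteq> {}"
  shows "weakly_contractible X"
  unfolding weakly_contractible_def
  using assms nullhomotopic_into_contractible_space by blast

lemma openin_tube_compactin:
  assumes W: "openin (prod_topology X Y) W" and K: "compactin X K"
  shows "openin Y {y \<in> topspace Y. K \<times> {y} \<subseteq> W}"
proof (subst openin_subopen, intro ballI)
  fix y assume "y \<in> {y \<in> topspace Y. K \<times> {y} \<subseteq> W}"
  then have "y \<in> topspace Y" "K \<times> {y} \<subseteq> W"
    by auto
  then obtain U V where "openin Y V" "y \<in> V" "K \<subseteq> U" "U \<times> V \<subseteq> W"
    using tube_lemma_left[OF W K] by metis
  moreover from this have "V \<subseteq> {y \<in> topspace Y. K \<times> {y} \<subseteq> W}"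
    using openin_subset by fastforce
  ultimately show "\<exists>V. openin Y V \<and> y \<in> V \<and> V \<subseteq> {y \<in> topspace Y. K \<times> {y} \<subseteq> W}"
    by blast
qed

section \<open>The geometric realization of the nerve\<close>

abbreviation simplex_top :: "nat \<Rightarrow> (nat \<Rightarrow> real) topology" where
  "simplex_top n \<equiv> subtopology (powertop_real UNIV) (std_simplex n)"

lemma real_class_equivclp: "real_class C p = {q. equivclp (real_gen C) p q}"
  by (simp add: real_class_def equivclp_def symclp_def[abs_def])

lemma real_class_self: "p \<in> real_class C p"
  by (simp add: real_class_equivclp)

lemma real_class_eq_iff: "real_class C p = real_class C q \<longleftrightarrow> equivclp (real_gen C) p q"
proof
  assume "real_class C p = real_class C q"
  then have "q \<in> real_class C p"
    using real_class_self by metis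
  then show "equivclp (real_gen C) p q"
    by (simp add: real_class_equivclp)
next
  assume "equivclp (real_gen C) p q"
  then show "real_class C p = real_class C q"
    unfolding real_class_equivclp by (blast intro: equivclp_trans equivclp_sym)
qed

lemma real_class_eqI: "real_gen C p q \<Longrightarrow> real_class C p = real_class C q"
  by (auto simp: real_class_eq_iff)

lemma istopology_realization:
  "istopology (\<lambda>U. U \<subseteq> real_class C ` real_pts C \<and>
      (\<forall>n \<sigma>. \<sigma> \<in> nerve C n \<longrightarrow>
         openin (simplex_top n) {t \<in> std_simplex n. real_class C (n, \<sigma>, t) \<in> U}))"
  (is "istopology ?P")
proof -
  have Int: "{t \<in> std_simplex n. real_class C (n, \<sigma>, t) \<in> S \<inter> T} =
      {t \<in> std_simplex n. real_class C (n, \<sigma>, t) \<in> S} \<inter> {t \<in> std_simplex n. real_class C (n, \<sigma>, t) \<in> T}"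
    for n \<sigma> S T by auto
  have Union: "{t \<in> std_simplex n. real_class C (n, \<sigma>, t) \<in> \<Union>\<K>} =
      (\<Union>U\<in>\<K>. {t \<in> std_simplex n. real_class C (n, \<sigma>, t) \<in> U})" for n \<sigma> \<K> by auto
  have "?P (S \<inter> T)" if "?P S" "?P T" for S T
    using that by (auto simp only: Int intro!: openin_Int)
  moreover have "?P (\<Union>\<K>)" if "\<forall>U\<in>\<K>. ?P U" for \<K>
    using that by (auto simp only: Union intro!: openin_Union)
  ultimately show ?thesis
    unfolding istopology_def by blast
qed

lemma openin_realization:
  "openin (realization C) U \<longleftrightarrow> U \<subseteq> real_class C ` real_pts C \<and>
      (\<forall>n \<sigma>. \<sigma> \<in> nerve C n \<longrightarrow>
         openin (simplex_top n) {t \<in> std_simplex n. real_class C (n, \<sigma>, t) \<in> U})"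
  unfolding realization_def by (simp only: topology_inverse'[OF istopology_realization])

lemma topspace_realization: "topspace (realization C) = real_class C ` real_pts C"
proof
  show "topspace (realization C) \<subseteq> real_class C ` real_pts C"
    unfolding topspace_def openin_realization by blast
  have "topspace (simplex_top n) = std_simplex n" for n
    by simp
  then have "openin (simplex_top n) (std_simplex n)" for n
    by (metis openin_topspace)
  moreover have "{t \<in> std_simplex n. real_class C (n, \<sigma>, t) \<in> real_class C ` real_pts C} = std_simplex n"
    if "\<sigma> \<in> nerve C n" for n \<sigma>
    using that by (auto simp: real_pts_def)
  ultimately have "openin (realization C) (real_class C ` real_pts C)"
    unfolding openin_realization by simp
  then show "real_class C ` real_pts C \<subseteq> topspace (realization C)"
    by (rule openin_subset)
qed

section \<open>Functoriality of the realization\<close>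

(* Independent of the representative picked by SOME whenever \<phi> respects real_gen. *)
definition class_lift :: "('o, 'm) cat \<Rightarrow> ('n rpt \<Rightarrow> 'm rpt) \<Rightarrow> 'n rpt set \<Rightarrow> 'm rpt set" where
  "class_lift D \<phi> c = real_class D (\<phi> (SOME p. p \<in> c))"

lemma equivclp_map:
  assumes "\<And>x y. r x y \<Longrightarrow> s (f x) (f y)" and "equivclp r x y"
  shows "equivclp s (f x) (f y)"
  using assms(2) by (induction rule: equivclp_induct) (auto intro: equivclp_into_equivclp assms(1))

lemma class_lift_real_class:
  assumes "\<And>p q. real_gen C p q \<Longrightarrow> real_gen D (\<phi> p) (\<phi> q)"
  shows "class_lift D \<phi> (real_class C p) = real_class D (\<phi> p)"
proof -
  define q where "q = (SOME q. q \<in> real_class C p)"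
  have "q \<in> real_class C p"
    unfolding q_def by (rule someI, rule real_class_self)
  then have "equivclp (real_gen D) (\<phi> p) (\<phi> q)"
    using equivclp_map[of "real_gen C" "real_gen D" \<phi>] assms by (simp add: real_class_equivclp)
  then show ?thesis
    by (simp add: class_lift_def q_def real_class_eq_iff equivclp_sym)
qed

definition nerve_map :: "('m \<Rightarrow> 'n) \<Rightarrow> nat \<Rightarrow> (nat \<Rightarrow> nat \<Rightarrow> 'm) \<Rightarrow> (nat \<Rightarrow> nat \<Rightarrow> 'n)" where
  "nerve_map Fm n \<sigma> = (\<lambda>i j. if i \<le> j \<and> j \<le> n then Fm (\<sigma> i j) else undefined)"

definition rpt_map :: "('m \<Rightarrow> 'n) \<Rightarrow> 'm rpt \<Rightarrow> 'n rpt" where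
  "rpt_map Fm = (\<lambda>(n, \<sigma>, t). (n, nerve_map Fm n \<sigma>, t))"

lemma rpt_map_simp [simp]: "rpt_map Fm (n, \<sigma>, t) = (n, nerve_map Fm n \<sigma>, t)"
  by (simp add: rpt_map_def)

lemma nerve_map_nerve:
  assumes F: "is_functor C D Fo Fm" and \<sigma>: "\<sigma> \<in> nerve C n"
  shows "nerve_map Fm n \<sigma> \<in> nerve D n"
proof -
  have \<sigma>_hom: "\<sigma> i j \<in> hom C (Dom C (\<sigma> i i)) (Dom C (\<sigma> j j))" if "i \<le> j" "j \<le> n" for i j
    using \<sigma> that by (auto simp: nerve_def)
  have F_hom: "f \<in> hom C x y \<Longrightarrow> Fm f \<in> hom D (Fo x) (Fo y)" for f x y
    using F by (auto simp: is_functor_def hom_def)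
  have F_dom: "i \<le> n \<Longrightarrow> Dom D (Fm (\<sigma> i i)) = Fo (Dom C (\<sigma> i i))" for i
    using F_hom[OF \<sigma>_hom[of i i]] by (auto simp: hom_def)
  show ?thesis
    unfolding nerve_def mem_Collect_eq
  proof (intro conjI allI impI)
    fix i assume i: "i \<le> n"
    have "Dom C (\<sigma> i i) \<in> Obj C" and "\<sigma> i i = Idm C (Dom C (\<sigma> i i))"
      using \<sigma> i by (auto simp: nerve_def)
    then show "Dom D (nerve_map Fm n \<sigma> i i) \<in> Obj D"
      and "nerve_map Fm n \<sigma> i i = Idm D (Dom D (nerve_map Fm n \<sigma> i i))"
      using F F_dom[OF i] i by (auto simp: nerve_map_def is_functor_def)
  next
    fix i j assume "i \<le> j \<and> j \<le> n"
    then show "nerve_map Fm n \<sigma> i j \<in> hom D (Dom D (nerve_map Fm n \<sigma> i i)) (Dom D (nerve_map Fm n \<sigma> j j))"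
      using F_hom[OF \<sigma>_hom[of i j]] F_dom[of i] F_dom[of j] by (simp add: nerve_map_def)
  next
    fix i j k assume ijk: "i \<le> j \<and> j \<le> k \<and> k \<le> n"
    then have "Comp C (\<sigma> j k) (\<sigma> i j) = \<sigma> i k"
      using \<sigma> by (auto simp: nerve_def)
    moreover have "Fm (Comp C (\<sigma> j k) (\<sigma> i j)) = Comp D (Fm (\<sigma> j k)) (Fm (\<sigma> i j))"
      using F \<sigma>_hom[of i j] \<sigma>_hom[of j k] ijk by (auto simp: is_functor_def hom_def)
    ultimately show "Comp D (nerve_map Fm n \<sigma> j k) (nerve_map Fm n \<sigma> i j) = nerve_map Fm n \<sigma> i k"
      using ijk by (simp add: nerve_map_def)
  qed (auto simp: nerve_map_def)
qed

lemma rpt_map_real_pts: "is_functor C D Fo Fm \<Longrightarrow> p \<in> real_pts C \<Longrightarrow> rpt_map Fm p \<in> real_pts D"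
  using nerve_map_nerve by (auto simp: real_pts_def)

lemma real_gen_rpt_map:
  assumes F: "is_functor C D Fo Fm" and "real_gen C p q"
  shows "real_gen D (rpt_map Fm p) (rpt_map Fm q)"
proof -
  obtain m n \<sigma> \<theta> s where p: "p = (m, simp_face \<sigma> \<theta> m, s)" and q: "q = (n, \<sigma>, simp_push \<theta> m n s)"
    and \<sigma>: "\<sigma> \<in> nerve C n" and \<theta>: "mono_map m n \<theta>" and s: "s \<in> std_simplex m"
    using assms(2) unfolding real_gen_def by blast
  have "nerve_map Fm m (simp_face \<sigma> \<theta> m) = simp_face (nerve_map Fm n \<sigma>) \<theta> m"
    using \<theta> by (auto simp: nerve_map_def simp_face_def mono_map_def fun_eq_iff)
  then show ?thesis
    unfolding real_gen_def using p q nerve_map_nerve[OF F \<sigma>] \<theta> s by auto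
qed

lemma real_class_rpt_map:
  "is_functor C D Fo Fm \<Longrightarrow> class_lift D (rpt_map Fm) (real_class C p) = real_class D (rpt_map Fm p)"
  by (rule class_lift_real_class) (rule real_gen_rpt_map)

lemma continuous_map_realization:
  assumes F: "is_functor C D Fo Fm"
  shows "continuous_map (realization C) (realization D) (class_lift D (rpt_map Fm))"
  unfolding continuous_map_def topspace_realization
proof (intro conjI Pi_I allI impI)
  fix c assume "c \<in> real_class C ` real_pts C"
  then show "class_lift D (rpt_map Fm) c \<in> real_class D ` real_pts D"
    using real_class_rpt_map[OF F] rpt_map_real_pts[OF F] by auto
next
  fix U assume U: "openin (realization D) U"
  show "openin (realization C) {c \<in> real_class C ` real_pts C. class_lift D (rpt_map Fm) c \<in> U}"
    unfolding openin_realization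
  proof (intro conjI allI impI)
    fix n \<sigma> assume \<sigma>: "\<sigma> \<in> nerve C n"
    then have "{t \<in> std_simplex n. real_class C (n, \<sigma>, t) \<in> {c \<in> real_class C ` real_pts C. class_lift D (rpt_map Fm) c \<in> U}}
        = {t \<in> std_simplex n. real_class D (n, nerve_map Fm n \<sigma>, t) \<in> U}"
      using real_class_rpt_map[OF F] by (auto simp: real_pts_def)
    moreover have "openin (simplex_top n) {t \<in> std_simplex n. real_class D (n, nerve_map Fm n \<sigma>, t) \<in> U}"
      using U nerve_map_nerve[OF F \<sigma>] unfolding openin_realization by blast
    ultimately show "openin (simplex_top n)
        {t \<in> std_simplex n. real_class C (n, \<sigma>, t) \<in> {c \<in> real_class C ` real_pts C. class_lift D (rpt_map Fm) c \<in> U}}"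
      by simp
  qed blast
qed

lemma nerve_map_retraction:
  assumes \<sigma>: "\<sigma> \<in> nerve D n" and FG: "\<And>g. g \<in> Arr D \<Longrightarrow> Fm (Gm g) = g"
  shows "nerve_map Fm n (nerve_map Gm n \<sigma>) = \<sigma>"
proof (intro ext)
  fix i j
  show "nerve_map Fm n (nerve_map Gm n \<sigma>) i j = \<sigma> i j"
  proof (cases "i \<le> j \<and> j \<le> n")
    case True
    then have "\<sigma> i j \<in> Arr D"
      using \<sigma> by (auto simp: nerve_def hom_def)
    then show ?thesis
      using True FG by (simp add: nerve_map_def)
  next
    case False
    then show ?thesis
      using \<sigma> by (auto simp: nerve_map_def nerve_def)
  qed
qed

lemma aspherical_cat_retract:
  assumes F: "is_functor C D Fo Fm" and G: "is_functor D C Go Gm"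
    and FG: "\<And>g. g \<in> Arr D \<Longrightarrow> Fm (Gm g) = g" and C: "aspherical_cat C"
  shows "aspherical_cat D"
proof -
  have "class_lift D (rpt_map Fm) (class_lift C (rpt_map Gm) y) = y"
    if "y \<in> topspace (realization D)" for y
  proof -
    from that obtain n \<sigma> t where y: "y = real_class D (n, \<sigma>, t)" and \<sigma>: "\<sigma> \<in> nerve D n"
      unfolding topspace_realization real_pts_def by blast
    show ?thesis
      unfolding y real_class_rpt_map[OF G] real_class_rpt_map[OF F]
      using nerve_map_retraction[of \<sigma> D n Fm Gm] \<sigma> FG by simp
  qed
  then show ?thesis
    using C weakly_contractible_retraction[OF continuous_map_realization[OF F] continuous_map_realization[OF G]]
    by (simp add: aspherical_cat_def)
qed

section \<open>Categories with a terminal object are aspherical\<close>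

lemma category_Dom_Obj: "category C \<Longrightarrow> f \<in> Arr C \<Longrightarrow> Dom C f \<in> Obj C"
  and category_Cod_Obj: "category C \<Longrightarrow> f \<in> Arr C \<Longrightarrow> Cod C f \<in> Obj C"
  and category_Idm_hom: "category C \<Longrightarrow> x \<in> Obj C \<Longrightarrow> Idm C x \<in> hom C x x"
  and category_Comp_hom: "category C \<Longrightarrow> f \<in> hom C x y \<Longrightarrow> g \<in> hom C y z \<Longrightarrow> Comp C g f \<in> hom C x z"
  and category_Comp_Idm_left: "category C \<Longrightarrow> f \<in> Arr C \<Longrightarrow> Comp C (Idm C (Cod C f)) f = f"
  and category_Comp_Idm_right: "category C \<Longrightarrow> f \<in> Arr C \<Longrightarrow> Comp C f (Idm C (Dom C f)) = f"
  unfolding category_def hom_def by auto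

locale terminal_object =
  fixes C :: "('o, 'm) cat" and T :: 'o
  assumes category: "category C" and terminal_Obj: "T \<in> Obj C"
    and terminal: "\<And>x. x \<in> Obj C \<Longrightarrow> \<exists>!f. f \<in> hom C x T"
begin

definition to_terminal :: "'o \<Rightarrow> 'm" where
  "to_terminal x = (THE f. f \<in> hom C x T)"

lemma to_terminal_hom: "x \<in> Obj C \<Longrightarrow> to_terminal x \<in> hom C x T"
  unfolding to_terminal_def using terminal by (rule theI')

lemma to_terminal_unique: "x \<in> Obj C \<Longrightarrow> f \<in> hom C x T \<Longrightarrow> f = to_terminal x"
  using terminal to_terminal_hom by blast

lemma to_terminal_T: "to_terminal T = Idm C T"
  using to_terminal_unique[OF terminal_Obj category_Idm_hom[OF category terminal_Obj]] by simp

definition cone_simplex :: "(nat \<Rightarrow> nat \<Rightarrow> 'm) \<Rightarrow> nat \<Rightarrow> (nat \<Rightarrow> nat \<Rightarrow> 'm)" where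
  "cone_simplex \<sigma> n = (\<lambda>i j. if i \<le> j \<and> j \<le> n then \<sigma> i j
      else if j = Suc n \<and> i \<le> n then to_terminal (Dom C (\<sigma> i i))
      else if i = Suc n \<and> j = Suc n then Idm C T else undefined)"

definition cone_vertex :: "(nat \<Rightarrow> nat \<Rightarrow> 'm) \<Rightarrow> nat \<Rightarrow> nat \<Rightarrow> 'o" where
  "cone_vertex \<sigma> n i = (if i \<le> n then Dom C (\<sigma> i i) else T)"

lemma cone_vertex_Obj: "\<sigma> \<in> nerve C n \<Longrightarrow> cone_vertex \<sigma> n i \<in> Obj C"
  using terminal_Obj by (auto simp: cone_vertex_def nerve_def)

lemma cone_simplex_apex: "i \<le> Suc n \<Longrightarrow> cone_simplex \<sigma> n i (Suc n) = to_terminal (cone_vertex \<sigma> n i)"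
  using to_terminal_T by (auto simp: cone_simplex_def cone_vertex_def)

lemma cone_simplex_hom:
  assumes \<sigma>: "\<sigma> \<in> nerve C n" and ij: "i \<le> j" "j \<le> Suc n"
  shows "cone_simplex \<sigma> n i j \<in> hom C (cone_vertex \<sigma> n i) (cone_vertex \<sigma> n j)"
proof (cases "j \<le> n")
  case True
  then show ?thesis
    using \<sigma> ij by (auto simp: cone_simplex_def cone_vertex_def nerve_def)
next
  case False
  then have "j = Suc n"
    using ij by simp
  then show ?thesis
    using cone_simplex_apex[of i] to_terminal_hom[OF cone_vertex_Obj[OF \<sigma>]] ij
    by (simp add: cone_vertex_def)
qed

lemma cone_simplex_nerve:
  assumes \<sigma>: "\<sigma> \<in> nerve C n"
  shows "cone_simplex \<sigma> n \<in> nerve C (Suc n)"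
proof -
  have diag: "i \<le> Suc n \<Longrightarrow> cone_simplex \<sigma> n i i = Idm C (cone_vertex \<sigma> n i)" for i
    using \<sigma> to_terminal_T by (auto simp: cone_simplex_def cone_vertex_def nerve_def)
  have Dom_diag: "i \<le> Suc n \<Longrightarrow> Dom C (cone_simplex \<sigma> n i i) = cone_vertex \<sigma> n i" for i
    using cone_simplex_hom[OF \<sigma>, of i i] by (simp add: hom_def)
  show ?thesis
    unfolding nerve_def mem_Collect_eq
  proof (intro conjI allI impI)
    fix i j k assume ijk: "i \<le> j \<and> j \<le> k \<and> k \<le> Suc n"
    show "Comp C (cone_simplex \<sigma> n j k) (cone_simplex \<sigma> n i j) = cone_simplex \<sigma> n i k"
    proof (cases "k \<le> n")
      case True
      then have "Comp C (\<sigma> j k) (\<sigma> i j) = \<sigma> i k"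
        using \<sigma> ijk by (auto simp: nerve_def)
      then show ?thesis
        using True ijk by (simp add: cone_simplex_def)
    next
      case False
      then have k: "k = Suc n"
        using ijk by simp
      have "Comp C (cone_simplex \<sigma> n j k) (cone_simplex \<sigma> n i j) \<in> hom C (cone_vertex \<sigma> n i) T"
        using category_Comp_hom[OF category cone_simplex_hom[OF \<sigma>, of i j] cone_simplex_hom[OF \<sigma>, of j k]] ijk k
        by (simp add: cone_vertex_def)
      then show ?thesis
        using to_terminal_unique[OF cone_vertex_Obj[OF \<sigma>]] cone_simplex_apex[of i] k ijk by simp
    qed
  qed (use Dom_diag diag cone_vertex_Obj[OF \<sigma>] cone_simplex_hom[OF \<sigma>] in \<open>auto simp: cone_simplex_def\<close>)
qed

definition cone_coords :: "real \<Rightarrow> (nat \<Rightarrow> real) \<Rightarrow> nat \<Rightarrow> (nat \<Rightarrow> real)" where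
  "cone_coords s t n = (\<lambda>k. if k \<le> n then (1 - s) * t k else if k = Suc n then s else 0)"

lemma cone_coords_simplex:
  assumes t: "t \<in> std_simplex n" and s: "0 \<le> s" "s \<le> 1"
  shows "cone_coords s t n \<in> std_simplex (Suc n)"
proof -
  have "(\<Sum>k\<le>Suc n. cone_coords s t n k) = (1 - s) * (\<Sum>k\<le>n. t k) + s"
    by (simp add: cone_coords_def sum_distrib_left)
  also have "\<dots> = 1"
    using t by (simp add: std_simplex_def)
  finally show ?thesis
    using t s unfolding std_simplex_def cone_coords_def by auto
qed

definition cone_pt :: "real \<Rightarrow> 'm rpt \<Rightarrow> 'm rpt" where
  "cone_pt s = (\<lambda>(n, \<sigma>, t). (Suc n, cone_simplex \<sigma> n, cone_coords s t n))"

lemma cone_pt_simp [simp]: "cone_pt s (n, \<sigma>, t) = (Suc n, cone_simplex \<sigma> n, cone_coords s t n)"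
  by (simp add: cone_pt_def)

lemma cone_pt_real_pts: "p \<in> real_pts C \<Longrightarrow> 0 \<le> s \<Longrightarrow> s \<le> 1 \<Longrightarrow> cone_pt s p \<in> real_pts C"
  using cone_simplex_nerve cone_coords_simplex by (auto simp: real_pts_def)

lemma cone_simplex_simp_face:
  assumes \<theta>: "mono_map m n \<theta>"
  shows "cone_simplex (simp_face \<sigma> \<theta> m) m = simp_face (cone_simplex \<sigma> n) (\<theta>(Suc m := Suc n)) (Suc m)"
proof (intro ext)
  fix i j
  have "\<theta> i \<le> \<theta> j" "\<theta> j \<le> n" if "i \<le> j" "j \<le> m"
    using \<theta> that by (auto simp: mono_map_def)
  moreover have "\<theta> i \<le> n" if "i \<le> m"
    using \<theta> that by (auto simp: mono_map_def)
  ultimately show "cone_simplex (simp_face \<sigma> \<theta> m) m i j = simp_face (cone_simplex \<sigma> n) (\<theta>(Suc m := Suc n)) (Suc m) i j"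
    by (auto simp: cone_simplex_def simp_face_def le_Suc_eq)
qed

lemma cone_coords_simp_push:
  assumes \<theta>: "mono_map m n \<theta>"
  shows "cone_coords s (simp_push \<theta> m n u) n = simp_push (\<theta>(Suc m := Suc n)) (Suc m) (Suc n) (cone_coords s u m)"
proof (intro ext)
  fix k
  let ?\<theta>' = "\<theta>(Suc m := Suc n)"
  consider "k \<le> n" | "k = Suc n" | "Suc n < k"
    by linarith
  then show "cone_coords s (simp_push \<theta> m n u) n k = simp_push ?\<theta>' (Suc m) (Suc n) (cone_coords s u m) k"
  proof cases
    case 1
    then have "{i. i \<le> Suc m \<and> ?\<theta>' i = k} = {i. i \<le> m \<and> \<theta> i = k}"
      by (auto simp: le_Suc_eq)
    moreover have "(\<Sum>i | i \<le> m \<and> \<theta> i = k. cone_coords s u m i) = (\<Sum>i | i \<le> m \<and> \<theta> i = k. (1 - s) * u i)"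
      by (rule sum.cong) (auto simp: cone_coords_def)
    ultimately show ?thesis
      using 1 by (simp add: cone_coords_def simp_push_def sum_distrib_left)
  next
    case 2
    then have "{i. i \<le> Suc m \<and> ?\<theta>' i = k} = {Suc m}"
      using \<theta> by (auto simp: mono_map_def le_Suc_eq)
    then show ?thesis
      using 2 by (simp add: cone_coords_def simp_push_def)
  next
    case 3
    then show ?thesis
      by (simp add: cone_coords_def simp_push_def)
  qed
qed

lemma mono_map_cone: "mono_map m n \<theta> \<Longrightarrow> mono_map (Suc m) (Suc n) (\<theta>(Suc m := Suc n))"
  by (auto simp: mono_map_def le_Suc_eq)

lemma real_gen_cone_pt:
  assumes "real_gen C p q" and s: "0 \<le> s" "s \<le> 1"
  shows "real_gen C (cone_pt s p) (cone_pt s q)"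
proof -
  obtain m n \<sigma> \<theta> u where p: "p = (m, simp_face \<sigma> \<theta> m, u)" and q: "q = (n, \<sigma>, simp_push \<theta> m n u)"
    and \<sigma>: "\<sigma> \<in> nerve C n" and \<theta>: "mono_map m n \<theta>" and u: "u \<in> std_simplex m"
    using assms(1) unfolding real_gen_def by blast
  show ?thesis
    unfolding real_gen_def p q cone_pt_simp cone_simplex_simp_face[OF \<theta>] cone_coords_simp_push[OF \<theta>]
    using cone_simplex_nerve[OF \<sigma>] mono_map_cone[OF \<theta>] cone_coords_simplex[OF u s] by blast
qed

definition apex :: "'m rpt" where
  "apex = (0, \<lambda>i j. if i \<le> j \<and> j \<le> 0 then Idm C T else undefined, \<lambda>k. if k = 0 then 1 else 0)"

lemma apex_real_pts: "apex \<in> real_pts C"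
proof -
  have "Idm C T \<in> hom C T T"
    using category_Idm_hom[OF category terminal_Obj] .
  moreover from this have "Comp C (Idm C T) (Idm C T) = Idm C T"
    using category_Comp_Idm_left[OF category, of "Idm C T"] by (auto simp: hom_def)
  ultimately show ?thesis
    using terminal_Obj by (auto simp: apex_def real_pts_def nerve_def hom_def std_simplex_def)
qed

lemma real_class_cone_pt_0:
  assumes "p \<in> real_pts C"
  shows "real_class C (cone_pt 0 p) = real_class C p"
proof -
  obtain n \<sigma> t where p: "p = (n, \<sigma>, t)" and \<sigma>: "\<sigma> \<in> nerve C n" and t: "t \<in> std_simplex n"
    using assms by (auto simp: real_pts_def)
  have face: "simp_face (cone_simplex \<sigma> n) (\<lambda>i. i) n = \<sigma>"
    using \<sigma> by (auto simp: simp_face_def cone_simplex_def nerve_def fun_eq_iff)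
  have "{i. i \<le> n \<and> i = k} = (if k \<le> n then {k} else {})" for k
    by auto
  then have push: "simp_push (\<lambda>i. i) n (Suc n) t = cone_coords 0 t n"
    by (auto simp: simp_push_def cone_coords_def fun_eq_iff)
  have "mono_map n (Suc n) (\<lambda>i. i)"
    by (simp add: mono_map_def)
  then have "real_gen C (n, simp_face (cone_simplex \<sigma> n) (\<lambda>i. i) n, t)
      (Suc n, cone_simplex \<sigma> n, simp_push (\<lambda>i. i) n (Suc n) t)"
    unfolding real_gen_def using cone_simplex_nerve[OF \<sigma>] t by blast
  then have "real_gen C p (cone_pt 0 p)"
    unfolding face push by (simp add: p)
  then show ?thesis
    by (metis real_class_eqI)
qed

lemma real_class_cone_pt_1:
  assumes "p \<in> real_pts C"
  shows "real_class C (cone_pt 1 p) = real_class C apex"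
proof -
  obtain n \<sigma> t where p: "p = (n, \<sigma>, t)" and \<sigma>: "\<sigma> \<in> nerve C n"
    using assms by (auto simp: real_pts_def)
  define e0 :: "nat \<Rightarrow> real" where "e0 = (\<lambda>k. if k = 0 then 1 else 0)"
  have face: "simp_face (cone_simplex \<sigma> n) (\<lambda>i. Suc n) 0 = (\<lambda>i j. if i \<le> j \<and> j \<le> 0 then Idm C T else undefined)"
    by (auto simp: simp_face_def cone_simplex_def fun_eq_iff)
  have "{i::nat. i \<le> 0 \<and> Suc n = k} = (if k = Suc n then {0} else {})" for k
    by auto
  then have push: "simp_push (\<lambda>i. Suc n) 0 (Suc n) e0 = cone_coords 1 t n"
    by (auto simp: simp_push_def cone_coords_def e0_def fun_eq_iff)
  have "mono_map 0 (Suc n) (\<lambda>i. Suc n)"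
    by (simp add: mono_map_def)
  moreover have "e0 \<in> std_simplex 0"
    by (auto simp: std_simplex_def e0_def)
  ultimately have "real_gen C (0, simp_face (cone_simplex \<sigma> n) (\<lambda>i. Suc n) 0, e0)
      (Suc n, cone_simplex \<sigma> n, simp_push (\<lambda>i. Suc n) 0 (Suc n) e0)"
    unfolding real_gen_def using cone_simplex_nerve[OF \<sigma>] by blast
  then have "real_gen C apex (cone_pt 1 p)"
    unfolding face push by (simp add: p apex_def e0_def)
  then show ?thesis
    by (metis real_class_eqI)
qed

definition contraction :: "real \<times> 'm rpt set \<Rightarrow> 'm rpt set" where
  "contraction x = class_lift C (cone_pt (fst x)) (snd x)"

lemma contraction_real_class:
  "0 \<le> s \<Longrightarrow> s \<le> 1 \<Longrightarrow> contraction (s, real_class C p) = real_class C (cone_pt s p)"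
  unfolding contraction_def by (simp add: class_lift_real_class real_gen_cone_pt)

lemma continuous_map_cone_coords:
  "continuous_map (prod_topology (top_of_set {0..1}) (simplex_top m)) (simplex_top (Suc m))
     (\<lambda>x. cone_coords (fst x) (snd x) m)"
  unfolding continuous_map_in_subtopology
proof
  let ?X = "prod_topology (top_of_set {0..1::real}) (simplex_top m)"
  have fst: "continuous_map ?X euclideanreal fst"
    using continuous_map_fst continuous_map_into_fulltopology by blast
  have proj: "continuous_map (simplex_top m) euclideanreal (\<lambda>t. t k)" for k
    by (intro continuous_map_from_subtopology continuous_map_product_projection) simp
  have snd: "continuous_map ?X euclideanreal (\<lambda>x. snd x k)" for k
    using continuous_map_compose[OF continuous_map_snd proj[of k]] by (simp add: o_def)
  show "continuous_map ?X (powertop_real UNIV) (\<lambda>x. cone_coords (fst x) (snd x) m)"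
    unfolding continuous_map_componentwise_UNIV cone_coords_def
    using fst snd by (auto intro!: continuous_map_real_mult continuous_map_diff)
  show "(\<lambda>x. cone_coords (fst x) (snd x) m) \<in> topspace ?X \<rightarrow> std_simplex (Suc m)"
    using cone_coords_simplex by auto
qed

lemma openin_cone_preimage:
  assumes \<sigma>: "\<sigma> \<in> nerve C m" and U: "openin (realization C) U"
  shows "openin (prod_topology (top_of_set {0..1}) (simplex_top m))
     {x \<in> {0..1} \<times> std_simplex m. real_class C (Suc m, cone_simplex \<sigma> m, cone_coords (fst x) (snd x) m) \<in> U}"
proof -
  have "openin (simplex_top (Suc m)) {t \<in> std_simplex (Suc m). real_class C (Suc m, cone_simplex \<sigma> m, t) \<in> U}"
    using U cone_simplex_nerve[OF \<sigma>] unfolding openin_realization by blast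
  from openin_continuous_map_preimage[OF continuous_map_cone_coords this]
  show ?thesis
    using cone_coords_simplex by (auto elim!: back_subst[of "openin _"])
qed

lemma openin_contraction_compact:
  assumes U: "openin (realization C) U" and K: "compact K" "K \<subseteq> {0..1}"
  shows "openin (realization C) {c \<in> topspace (realization C). \<forall>s\<in>K. contraction (s, c) \<in> U}"
  unfolding openin_realization
proof (intro conjI allI impI)
  fix m \<tau> assume \<tau>: "\<tau> \<in> nerve C m"
  let ?G = "{x \<in> {0..1} \<times> std_simplex m.
              real_class C (Suc m, cone_simplex \<tau> m, cone_coords (fst x) (snd x) m) \<in> U}"
  have iff: "contraction (s, real_class C (m, \<tau>, t)) \<in> U \<longleftrightarrow> (s, t) \<in> ?G"
    if "s \<in> K" "t \<in> std_simplex m" for s t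
  proof -
    have "0 \<le> s" "s \<le> 1"
      using that K by auto
    then show ?thesis
      using that contraction_real_class[of s] by simp
  qed
  have "real_class C (m, \<tau>, t) \<in> {c \<in> topspace (realization C). \<forall>s\<in>K. contraction (s, c) \<in> U}
      \<longleftrightarrow> K \<times> {t} \<subseteq> ?G" if "t \<in> std_simplex m" for t
  proof -
    have "real_class C (m, \<tau>, t) \<in> topspace (realization C)"
      using \<tau> that by (auto simp: topspace_realization real_pts_def)
    then show ?thesis
      using iff[OF _ that] by blast
  qed
  then have "{t \<in> std_simplex m. real_class C (m, \<tau>, t) \<in>
                {c \<in> topspace (realization C). \<forall>s\<in>K. contraction (s, c) \<in> U}}
           = {t \<in> topspace (simplex_top m). K \<times> {t} \<subseteq> ?G}"
    by auto
  moreover have "compactin (top_of_set {0..1}) K"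
    using K by (simp add: compactin_subtopology compactin_euclidean_iff)
  ultimately show "openin (simplex_top m) {t \<in> std_simplex m. real_class C (m, \<tau>, t) \<in>
                {c \<in> topspace (realization C). \<forall>s\<in>K. contraction (s, c) \<in> U}}"
    using openin_tube_compactin[OF openin_cone_preimage[OF \<tau> U]] by simp
qed (auto simp: topspace_realization)

lemma contraction_continuous_in_time:
  assumes U: "openin (realization C) U" and s0: "s0 \<in> {0..1}" and c0: "c0 \<in> topspace (realization C)"
    and in_U: "contraction (s0, c0) \<in> U"
  obtains e where "e > 0" and "\<And>s. s \<in> {0..1} \<Longrightarrow> dist s s0 \<le> e \<Longrightarrow> contraction (s, c0) \<in> U"
proof -
  obtain n \<sigma> t0 where c0_eq: "c0 = real_class C (n, \<sigma>, t0)" and \<sigma>: "\<sigma> \<in> nerve C n"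
    and t0: "t0 \<in> std_simplex n"
    using c0 unfolding topspace_realization real_pts_def by blast
  let ?G = "{x \<in> {0..1} \<times> std_simplex n.
              real_class C (Suc n, cone_simplex \<sigma> n, cone_coords (fst x) (snd x) n) \<in> U}"
  have "continuous_map (top_of_set {0..1}) (prod_topology (top_of_set {0..1}) (simplex_top n)) (\<lambda>s. (s, t0))"
    using t0 by (intro continuous_map_pairedI) (auto simp: continuous_map_id[unfolded id_def])
  then have "openin (top_of_set {0..1}) {s \<in> {0..1}. (s, t0) \<in> ?G}"
    using openin_continuous_map_preimage[OF _ openin_cone_preimage[OF \<sigma> U]] by fastforce
  moreover have "s0 \<in> {s \<in> {0..1}. (s, t0) \<in> ?G}"
    using in_U s0 t0 contraction_real_class[of s0] by (auto simp: c0_eq)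
  ultimately obtain e where "e > 0" and e: "\<And>s. s \<in> {0..1} \<Longrightarrow> dist s s0 < e \<Longrightarrow> (s, t0) \<in> ?G"
    unfolding openin_euclidean_subtopology_iff by blast
  show thesis
  proof (rule that[of "e/2"])
    show "e/2 > 0"
      using \<open>e > 0\<close> by simp
    fix s assume "s \<in> {0..1}" "dist s s0 \<le> e/2"
    then show "contraction (s, c0) \<in> U"
      using e[of s] \<open>e > 0\<close> contraction_real_class[of s] t0 by (auto simp: c0_eq)
  qed
qed

lemma continuous_map_contraction:
  "continuous_map (prod_topology (top_of_set {0..1}) (realization C)) (realization C) contraction"
  unfolding continuous_map_def
proof (intro conjI allI impI Pi_I)
  fix x assume "x \<in> topspace (prod_topology (top_of_set {0..1::real}) (realization C))"
  then obtain s p where "x = (s, real_class C p)" "s \<in> {0..1}" "p \<in> real_pts C"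
    by (auto simp: topspace_realization)
  then show "contraction x \<in> topspace (realization C)"
    using contraction_real_class cone_pt_real_pts by (auto simp: topspace_realization)
next
  fix U assume U: "openin (realization C) U"
  let ?H = "{x \<in> topspace (prod_topology (top_of_set {0..1}) (realization C)). contraction x \<in> U}"
  show "openin (prod_topology (top_of_set {0..1}) (realization C)) ?H"
    unfolding openin_prod_topology_alt
  proof (intro allI impI)
    fix s0 c0 assume "(s0, c0) \<in> ?H"
    then have s0: "s0 \<in> {0..1}" and c0: "c0 \<in> topspace (realization C)"
      and "contraction (s0, c0) \<in> U"
      by auto
    then obtain e where "e > 0" and e: "\<And>s. s \<in> {0..1} \<Longrightarrow> dist s s0 \<le> e \<Longrightarrow> contraction (s, c0) \<in> U"
      using contraction_continuous_in_time[OF U] by metis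
    define K where "K = cball s0 e \<inter> {0..1}"
    define W where "W = {c \<in> topspace (realization C). \<forall>s\<in>K. contraction (s, c) \<in> U}"
    have "compact K" "K \<subseteq> {0..1}"
      by (auto simp: K_def compact_Int_closed)
    then have "openin (realization C) W"
      unfolding W_def using openin_contraction_compact[OF U] by blast
    moreover have "openin (top_of_set {0..1}) ({0..1} \<inter> ball s0 e)"
      by (intro openin_open_Int) simp
    moreover have "c0 \<in> W"
      using c0 e by (auto simp: W_def K_def dist_commute)
    moreover have "({0..1} \<inter> ball s0 e) \<times> W \<subseteq> ?H"
      by (auto simp: W_def K_def)
    ultimately show "\<exists>V W. openin (top_of_set {0..1}) V \<and> openin (realization C) W \<and> s0 \<in> V \<and> c0 \<in> W \<and>
        V \<times> W \<subseteq> ?H"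
      using s0 \<open>e > 0\<close> by (intro exI) auto
  qed
qed

lemma contractible_realization: "contractible_space (realization C)"
  unfolding contractible_space_def homotopic_with[where P = "\<lambda>_. True", simplified]
proof (intro exI[of _ "real_class C apex"] exI[of _ contraction] conjI ballI)
  show "continuous_map (prod_topology (top_of_set {0..1}) (realization C)) (realization C) contraction"
    by (rule continuous_map_contraction)
  fix c assume "c \<in> topspace (realization C)"
  then obtain p where p: "p \<in> real_pts C" and c: "c = real_class C p"
    by (auto simp: topspace_realization)
  show "contraction (0, c) = id c"
    using contraction_real_class[of 0] real_class_cone_pt_0[OF p] c by simp
  show "contraction (1, c) = real_class C apex"
    using contraction_real_class[of 1] real_class_cone_pt_1[OF p] c by simp
qed

lemma aspherical: "aspherical_cat C"
  unfolding aspherical_cat_def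
  using contractible_imp_weakly_contractible[OF contractible_realization] apex_real_pts
  by (auto simp: topspace_realization)

end

section \<open>Categories of elements and the Yoneda lemma\<close>

lemma elements_simps:
  "Obj (elements A X) = {(x, v). x \<in> Obj A \<and> v \<in> fst X x}"
  "Arr (elements A X) = {(f, v). f \<in> Arr A \<and> v \<in> fst X (Cod A f)}"
  "Dom (elements A X) (f, v) = (Dom A f, snd X f v)"
  "Cod (elements A X) (f, v) = (Cod A f, v)"
  "Idm (elements A X) (x, v) = (Idm A x, v)"
  "Comp (elements A X) (g, w) (f, v) = (Comp A g f, w)"
  by (simp_all add: elements_def)

lemma elements_category:
  assumes A: "category A" and X: "presheaf A X"
  shows "category (elements A X)"
  using A X unfolding category_def elements_def hom_def presheaf_def
  by (simp add: split_beta)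

lemma yo_presheaf:
  assumes A: "category A" and a: "a \<in> Obj A"
  shows "presheaf A (yo A a)"
  using A unfolding presheaf_def yo_def
  by (auto simp: category_def hom_def)

lemma terminal_object_elements_yo:
  assumes A: "category A" and a: "a \<in> Obj A"
  shows "terminal_object (elements A (yo A a)) (a, Idm A a)"
proof
  show "category (elements A (yo A a))"
    using A a by (intro elements_category yo_presheaf)
  show "(a, Idm A a) \<in> Obj (elements A (yo A a))"
    using A a by (simp add: elements_def yo_def category_def)
  fix x assume "x \<in> Obj (elements A (yo A a))"
  then obtain y g where x: "x = (y, g)" and g: "g \<in> hom A y a"
    by (auto simp: elements_def yo_def split: if_splits)
  show "\<exists>!f. f \<in> hom (elements A (yo A a)) x (a, Idm A a)"
  proof
    show "(g, Idm A a) \<in> hom (elements A (yo A a)) x (a, Idm A a)"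
      using A a g category_Comp_Idm_left[OF A] category_Idm_hom[OF A a]
      by (auto simp: x hom_def elements_def yo_def category_Dom_Obj)
  next
    fix f assume f: "f \<in> hom (elements A (yo A a)) x (a, Idm A a)"
    then obtain h where h: "f = (h, Idm A a)" "h \<in> Arr A" "Cod A h = a" "snd (yo A a) h (Idm A a) = g"
      by (auto simp: x hom_def elements_def)
    then have "h = g"
      using category_Comp_Idm_left[OF A h(2)] category_Idm_hom[OF A a] by (auto simp: yo_def hom_def)
    then show "f = (g, Idm A a)"
      using h by simp
  qed
qed

lemma hom_psh_cat:
  "\<tau> \<in> hom (psh_cat A) Y X \<longleftrightarrow> (\<exists>\<eta>. \<tau> = (Y, X, \<eta>) \<and> presheaf A Y \<and> presheaf A X \<and> \<eta> \<in> nt_hom A Y X)"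
  by (auto simp: hom_def psh_cat_def)

locale yoneda =
  fixes A :: "('o, 'm) cat" and X :: "('o, 'm) pshA"
  assumes category: "category A" and presheaf: "presheaf A X"
begin

abbreviation hom_yo :: "('o, 'm, ('o, 'm) pshA_arr) psh" where
  "hom_yo \<equiv> pull_hom A (psh_cat A) (yo A) (yo_arr A) X"

definition yoneda_nt :: "'o \<Rightarrow> 'm \<Rightarrow> 'o \<Rightarrow> 'm \<Rightarrow> 'm" where
  "yoneda_nt x v = (\<lambda>y g. if y \<in> Obj A \<and> g \<in> hom A y x then snd X g v else undefined)"

lemma yo_Obj: "x \<in> Obj A \<Longrightarrow> fst (yo A a) x = hom A x a"
  by (simp add: yo_def)

lemma mem_hom_yo:
  "x \<in> Obj A \<Longrightarrow> \<tau> \<in> fst hom_yo x \<longleftrightarrow> (\<exists>\<eta>. \<tau> = (yo A x, X, \<eta>) \<and> \<eta> \<in> nt_hom A (yo A x) X)"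
  using presheaf yo_presheaf[OF category] by (auto simp: pull_hom_def hom_psh_cat)

lemma nt_hom_yo_eq:
  assumes x: "x \<in> Obj A" and \<eta>: "\<eta> \<in> nt_hom A (yo A x) X" and g: "g \<in> hom A y x"
  shows "\<eta> y g = snd X g (\<eta> x (Idm A x))"
proof -
  have g: "g \<in> Arr A" "Dom A g = y" "Cod A g = x"
    using g by (auto simp: hom_def)
  have "Idm A x \<in> fst (yo A x) (Cod A g)"
    using g x category_Idm_hom[OF category x] by (simp add: yo_Obj)
  then have "\<eta> (Dom A g) (snd (yo A x) g (Idm A x)) = snd X g (\<eta> (Cod A g) (Idm A x))"
    using \<eta> g by (auto simp: nt_hom_def)
  moreover have "snd (yo A x) g (Idm A x) = g"
    using g x category_Idm_hom[OF category x] category_Comp_Idm_left[OF category g(1)] by (simp add: yo_def)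
  ultimately show ?thesis
    using g by simp
qed

lemma yoneda_nt_eval:
  assumes x: "x \<in> Obj A" and \<eta>: "\<eta> \<in> nt_hom A (yo A x) X"
  shows "yoneda_nt x (\<eta> x (Idm A x)) = \<eta>"
proof (intro ext)
  fix y g
  show "yoneda_nt x (\<eta> x (Idm A x)) y g = \<eta> y g"
  proof (cases "y \<in> Obj A \<and> g \<in> hom A y x")
    case True
    then show ?thesis
      using nt_hom_yo_eq[OF x \<eta>] by (simp add: yoneda_nt_def)
  next
    case False
    then have "\<eta> y g = undefined"
      using \<eta> by (auto simp: nt_hom_def yo_def)
    then show ?thesis
      using False by (auto simp: yoneda_nt_def)
  qed
qed

lemma yoneda_nt_nt_hom:
  assumes x: "x \<in> Obj A" and v: "v \<in> fst X x"
  shows "yoneda_nt x v \<in> nt_hom A (yo A x) X"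
  unfolding nt_hom_def mem_Collect_eq
proof (intro conjI ballI allI impI)
  fix y g assume "y \<in> Obj A" "g \<in> fst (yo A x) y"
  then show "yoneda_nt x v y g \<in> fst X y"
    using presheaf v by (auto simp: yoneda_nt_def yo_def hom_def presheaf_def)
next
  fix f g assume f: "f \<in> Arr A" and "g \<in> fst (yo A x) (Cod A f)"
  then have g: "g \<in> hom A (Cod A f) x"
    using category_Cod_Obj[OF category f] by (simp add: yo_Obj)
  have "Comp A g f \<in> hom A (Dom A f) x"
    using category_Comp_hom[OF category _ g, of f] f by (simp add: hom_def)
  then have "yoneda_nt x v (Dom A f) (snd (yo A x) f g) = snd X (Comp A g f) v"
    using f g category_Dom_Obj[OF category f] by (simp add: yoneda_nt_def yo_def)
  also have "\<dots> = snd X f (snd X g v)"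
    using presheaf f g v unfolding presheaf_def hom_def by auto
  also have "\<dots> = snd X f (yoneda_nt x v (Cod A f) g)"
    using g category_Cod_Obj[OF category f] by (simp add: yoneda_nt_def)
  finally show "yoneda_nt x v (Dom A f) (snd (yo A x) f g) = snd X f (yoneda_nt x v (Cod A f) g)" .
next
  fix y g assume "\<not> (y \<in> Obj A \<and> g \<in> fst (yo A x) y)"
  then show "yoneda_nt x v y g = undefined"
    by (auto simp: yoneda_nt_def yo_def)
qed

lemma hom_yo_action:
  assumes f: "f \<in> Arr A" and \<eta>: "\<eta> \<in> nt_hom A (yo A (Cod A f)) X"
  shows "snd hom_yo f (yo A (Cod A f), X, \<eta>) = (yo A (Dom A f), X, nt_comp A (yo A (Dom A f)) \<eta> (snd (snd (yo_arr A f))))"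
proof -
  have "(yo A (Cod A f), X, \<eta>) \<in> hom (psh_cat A) (yo A (Cod A f)) X"
    using mem_hom_yo[OF category_Cod_Obj[OF category f]] \<eta> category_Cod_Obj[OF category f]
    by (simp add: pull_hom_def)
  then show ?thesis
    using f by (simp add: pull_hom_def psh_cat_def yo_arr_def)
qed

lemma yoneda_nt_action:
  assumes h: "h \<in> Arr A" and v: "v \<in> fst X (Cod A h)"
  shows "nt_comp A (yo A (Dom A h)) (yoneda_nt (Cod A h) v) (snd (snd (yo_arr A h))) = yoneda_nt (Dom A h) (snd X h v)"
proof (intro ext)
  fix y g
  show "nt_comp A (yo A (Dom A h)) (yoneda_nt (Cod A h) v) (snd (snd (yo_arr A h))) y g = yoneda_nt (Dom A h) (snd X h v) y g"
  proof (cases "y \<in> Obj A \<and> g \<in> hom A y (Dom A h)")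
    case True
    then have "Comp A h g \<in> hom A y (Cod A h)"
      using category_Comp_hom[OF category, of g y "Dom A h" h "Cod A h"] h by (simp add: hom_def)
    moreover have "snd X (Comp A h g) v = snd X g (snd X h v)"
      using presheaf True h v unfolding presheaf_def hom_def by auto
    ultimately show ?thesis
      using True by (simp add: nt_comp_def yo_Obj yo_arr_def yoneda_nt_def)
  next
    case False
    then show ?thesis
      by (auto simp: nt_comp_def yo_def yoneda_nt_def)
  qed
qed

definition emb_obj :: "'o \<times> 'm \<Rightarrow> 'o \<times> ('o, 'm) pshA_arr" where
  "emb_obj = (\<lambda>(x, v). (x, (yo A x, X, yoneda_nt x v)))"

definition emb_arr :: "'m \<times> 'm \<Rightarrow> 'm \<times> ('o, 'm) pshA_arr" where
  "emb_arr = (\<lambda>(f, v). (f, (yo A (Cod A f), X, yoneda_nt (Cod A f) v)))"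

definition eval_obj :: "'o \<times> ('o, 'm) pshA_arr \<Rightarrow> 'o \<times> 'm" where
  "eval_obj = (\<lambda>(x, \<tau>). (x, snd (snd \<tau>) x (Idm A x)))"

definition eval_arr :: "'m \<times> ('o, 'm) pshA_arr \<Rightarrow> 'm \<times> 'm" where
  "eval_arr = (\<lambda>(f, \<tau>). (f, snd (snd \<tau>) (Cod A f) (Idm A (Cod A f))))"

lemma is_functor_emb: "is_functor (elements A X) (elements A hom_yo) emb_obj emb_arr"
  unfolding is_functor_def
proof (intro conjI ballI allI impI)
  fix x assume "x \<in> Obj (elements A X)"
  then obtain y v where x: "x = (y, v)" "y \<in> Obj A" "v \<in> fst X y"
    by (auto simp: elements_simps)
  then show "emb_obj x \<in> Obj (elements A hom_yo)"
    using mem_hom_yo yoneda_nt_nt_hom by (auto simp: elements_simps emb_obj_def)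
next
  fix f assume "f \<in> Arr (elements A X)"
  then obtain h v where f: "f = (h, v)" "h \<in> Arr A" "v \<in> fst X (Cod A h)"
    by (auto simp: elements_simps)
  have Cod: "Cod A h \<in> Obj A"
    using category_Cod_Obj[OF category f(2)] .
  have "snd hom_yo h (yo A (Cod A h), X, yoneda_nt (Cod A h) v)
      = (yo A (Dom A h), X, yoneda_nt (Dom A h) (snd X h v))"
    using hom_yo_action[OF f(2) yoneda_nt_nt_hom[OF Cod f(3)]] yoneda_nt_action[OF f(2,3)] by simp
  then show "emb_arr f \<in> hom (elements A hom_yo) (emb_obj (Dom (elements A X) f)) (emb_obj (Cod (elements A X) f))"
    using f mem_hom_yo[OF Cod] yoneda_nt_nt_hom[OF Cod f(3)]
    by (simp add: hom_def elements_simps emb_arr_def emb_obj_def)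
next
  fix x assume "x \<in> Obj (elements A X)"
  then obtain y v where "x = (y, v)" "y \<in> Obj A"
    by (auto simp: elements_simps)
  then show "emb_arr (Idm (elements A X) x) = Idm (elements A hom_yo) (emb_obj x)"
    using category_Idm_hom[OF category] by (simp add: elements_simps emb_arr_def emb_obj_def hom_def)
next
  fix f g assume "f \<in> Arr (elements A X)" "g \<in> Arr (elements A X)"
    and "Cod (elements A X) f = Dom (elements A X) g"
  then show "emb_arr (Comp (elements A X) g f) = Comp (elements A hom_yo) (emb_arr g) (emb_arr f)"
    using category_Comp_hom[OF category] by (auto simp: elements_simps emb_arr_def hom_def)
qed

lemma is_functor_eval: "is_functor (elements A hom_yo) (elements A X) eval_obj eval_arr"
  unfolding is_functor_def
proof (intro conjI ballI allI impI)
  fix x assume "x \<in> Obj (elements A hom_yo)"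
  then obtain y \<tau> where x: "x = (y, \<tau>)" "y \<in> Obj A" "\<tau> \<in> fst hom_yo y"
    by (auto simp: elements_simps)
  then obtain \<eta> where \<tau>: "\<tau> = (yo A y, X, \<eta>)" and \<eta>: "\<eta> \<in> nt_hom A (yo A y) X"
    using mem_hom_yo by blast
  have "\<eta> y (Idm A y) \<in> fst X y"
    using \<eta> x(2) category_Idm_hom[OF category x(2)] by (auto simp: nt_hom_def yo_Obj)
  then show "eval_obj x \<in> Obj (elements A X)"
    using x \<tau> by (simp add: elements_simps eval_obj_def)
next
  fix f assume "f \<in> Arr (elements A hom_yo)"
  then obtain h \<tau> where f: "f = (h, \<tau>)" "h \<in> Arr A" "\<tau> \<in> fst hom_yo (Cod A h)"
    by (auto simp: elements_simps)
  have Cod: "Cod A h \<in> Obj A" and Dom: "Dom A h \<in> Obj A"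
    using category_Cod_Obj[OF category f(2)] category_Dom_Obj[OF category f(2)] .
  obtain \<eta> where \<tau>: "\<tau> = (yo A (Cod A h), X, \<eta>)" and \<eta>: "\<eta> \<in> nt_hom A (yo A (Cod A h)) X"
    using mem_hom_yo[OF Cod] f(3) by blast
  have "\<eta> (Cod A h) (Idm A (Cod A h)) \<in> fst X (Cod A h)"
    using \<eta> Cod category_Idm_hom[OF category Cod] by (auto simp: nt_hom_def yo_Obj)
  moreover have "nt_comp A (yo A (Dom A h)) \<eta> (snd (snd (yo_arr A h))) (Dom A h) (Idm A (Dom A h)) = \<eta> (Dom A h) h"
    using Dom category_Idm_hom[OF category Dom] category_Comp_Idm_right[OF category f(2)]
    by (simp add: nt_comp_def yo_Obj yo_arr_def)
  moreover have "\<eta> (Dom A h) h = snd X h (\<eta> (Cod A h) (Idm A (Cod A h)))"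
    using nt_hom_yo_eq[OF Cod \<eta>] f(2) by (simp add: hom_def)
  ultimately show "eval_arr f \<in> hom (elements A X) (eval_obj (Dom (elements A hom_yo) f)) (eval_obj (Cod (elements A hom_yo) f))"
    using f \<tau> hom_yo_action[OF f(2) \<eta>] by (simp add: hom_def elements_simps eval_arr_def eval_obj_def)
next
  fix x assume "x \<in> Obj (elements A hom_yo)"
  then obtain y \<tau> where "x = (y, \<tau>)" "y \<in> Obj A"
    by (auto simp: elements_simps)
  then show "eval_arr (Idm (elements A hom_yo) x) = Idm (elements A X) (eval_obj x)"
    using category_Idm_hom[OF category] by (simp add: elements_simps eval_arr_def eval_obj_def hom_def)
next
  fix f g assume "f \<in> Arr (elements A hom_yo)" "g \<in> Arr (elements A hom_yo)"
    and "Cod (elements A hom_yo) f = Dom (elements A hom_yo) g"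
  then show "eval_arr (Comp (elements A hom_yo) g f) = Comp (elements A X) (eval_arr g) (eval_arr f)"
    using category_Comp_hom[OF category] by (auto simp: elements_simps eval_arr_def hom_def)
qed

lemma emb_eval:
  assumes "g \<in> Arr (elements A hom_yo)"
  shows "emb_arr (eval_arr g) = g"
proof -
  obtain h \<tau> where g: "g = (h, \<tau>)" "h \<in> Arr A" "\<tau> \<in> fst hom_yo (Cod A h)"
    using assms by (auto simp: elements_simps)
  have Cod: "Cod A h \<in> Obj A"
    using category_Cod_Obj[OF category g(2)] .
  obtain \<eta> where \<tau>: "\<tau> = (yo A (Cod A h), X, \<eta>)" and \<eta>: "\<eta> \<in> nt_hom A (yo A (Cod A h)) X"
    using mem_hom_yo[OF Cod] g(3) by blast
  show ?thesis
    using g \<tau> yoneda_nt_eval[OF Cod \<eta>] by (simp add: emb_arr_def eval_arr_def)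
qed

lemma aspherical_slice_yo:
  "aspherical_psh A X \<Longrightarrow> aspherical_cat (slice A (psh_cat A) (yo A) (yo_arr A) X)"
  unfolding slice_def aspherical_psh_def
  using aspherical_cat_retract[OF is_functor_emb is_functor_eval emb_eval] .

end

section \<open>Full subcategories\<close>

lemma Obj_full_sub: "Obj (full_sub C S) = S"
  by (simp add: full_sub_def)

lemma hom_full_sub: "x \<in> S \<Longrightarrow> y \<in> S \<Longrightarrow> hom (full_sub C S) x y = hom C x y"
  by (auto simp: hom_def full_sub_def)

lemma pull_hom_full_sub:
  assumes D: "category D" and uo: "uo ` Obj D \<subseteq> S" and e: "e \<in> S"
  shows "pull_hom D (full_sub E S) uo um e = pull_hom D E uo um e"
proof -
  have "hom (full_sub E S) (uo d) e = hom E (uo d) e" if "d \<in> Obj D" for d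
    using that uo e by (intro hom_full_sub) auto
  then show ?thesis
    unfolding pull_hom_def using category_Cod_Obj[OF D] by (auto simp: full_sub_def fun_eq_iff)
qed

lemma aspherical_functor_full_sub_iff:
  assumes "category D" and "uo ` Obj D \<subseteq> S"
  shows "aspherical_functor D (full_sub E S) uo um \<longleftrightarrow> (\<forall>e\<in>S. aspherical_cat (slice D E uo um e))"
proof -
  have "slice D (full_sub E S) uo um e = slice D E uo um e" if "e \<in> S" for e
    unfolding slice_def by (rule arg_cong[where f = "elements D"], rule pull_hom_full_sub[OF assms that])
  then show ?thesis
    by (simp add: aspherical_functor_def Obj_full_sub)
qed

theorem proposition6p9:
  fixes A :: "('oa, 'ma) cat" and B :: "('ob, 'mb) cat"
    and jo :: "'ob \<Rightarrow> ('oa, 'ma) pshA" and jm :: "'mb \<Rightarrow> ('oa, 'ma) pshA_arr"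
  assumes "category A" and "category B"
    and "is_functor B (psh_cat A) jo jm"
    and "aspherical_psh_functor A B jo jm"
  shows "aspherical_functor B (full_sub (psh_cat A) (yo A ` Obj A \<union> jo ` Obj B)) jo jm
       \<and> aspherical_functor A (full_sub (psh_cat A) (yo A ` Obj A \<union> jo ` Obj B)) (yo A) (yo_arr A)"
proof -
  let ?S = "yo A ` Obj A \<union> jo ` Obj B"
  have "aspherical_cat (slice B (psh_cat A) jo jm e)" if "e \<in> ?S" for e
    using assms(4) that unfolding aspherical_psh_functor_def aspherical_psh_def slice_def jstar_def by blast
  moreover have "aspherical_cat (slice A (psh_cat A) (yo A) (yo_arr A) e)" if "e \<in> ?S" for e
  proof -
    have "presheaf A (jo b)" if "b \<in> Obj B" for b
      using assms(3) that by (auto simp: is_functor_def psh_cat_def)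
    then have "presheaf A e" and "aspherical_psh A e"
      using that assms(4) yo_presheaf[OF assms(1)]
        terminal_object.aspherical[OF terminal_object_elements_yo[OF assms(1)]]
      by (auto simp: aspherical_psh_functor_def aspherical_psh_def)
    then show ?thesis
      using yoneda.aspherical_slice_yo[OF yoneda.intro[OF assms(1)]] by blast
  qed
  ultimately show ?thesis
    using assms(1,2) by (simp add: aspherical_functor_full_sub_iff)
qed

end
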